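(* For integers $i\ge0$, $j\ge0$, $j_1\ge0$, $j_2\ge0$ and real $k_1,k_2,k$: (a) $b_{i,j_1+j_2,0}=\sum_{r=0}^{i}\binom{i}{r}b_{r,j_1,k}\,b_{i-r,j_2,-k}$; (b) $b_{i,j,0}=\sum_{r=0}^{i}\binom{i}{r}k^r\,b_{i-r,j,-k}$; (c) $b_{i,j,k}=\sum_{r=0}^{i}\binom{i}{r}k^{i-r}\,b_{r,j,0}$; (d) $b_{i,j,k_1+k_2}=\sum_{r=0}^{i}\binom{i}{r}k_1^{i-r}\,b_{r,j,k_2}$; (e) if $j\ge1$, then $j\cdot b_{i,j-1,k+1}=\sum_{r=0}^{i}\binom{i}{r}k^{i-r}\,b_{r+1,j,0}$.
   Context: For integers $i\ge0$, $j\ge0$ and real $k$, $b_{i,j,k}=\sum_{r=0}^{j}\binom{j}{r}(-1)^{j-r}(r+k)^i$, with the convention $0^0=1$ (also in the powers of $k$, $k_1$ appearing above). *)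

theory Defs
  imports Complex_Main
begin

text \<open>b i j k = sum over r from 0 to j of (j choose r) (-1)^(j-r) (r+k)^i.
  Powers use the natural-number exponent, so 0^0 = 1 as required.\<close>
definition b :: "nat \<Rightarrow> nat \<Rightarrow> real \<Rightarrow> real" where
  "b i j k = (\<Sum>r=0..j. real (j choose r) * (-1) ^ (j - r) * (real r + k) ^ i)"

end

theory Submission
  imports Defs
begin

text \<open>\<open>b i j k\<close> is the \<open>j\<close>-th forward difference of \<open>x ^ i\<close> at \<open>k\<close>. Iterated forward
  differences are linear, commute with translations and compose additively, and the \<open>(m + 1)\<close>-st
  difference of \<open>x * f x\<close> at \<open>0\<close> is \<open>m + 1\<close> times the \<open>m\<close>-th difference of \<open>f\<close> at \<open>1\<close>.
  Expanding \<open>(x + c) ^ i\<close> binomially gives (d), of which (b) and (c) are special cases; (a) follows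
  by splitting the \<open>(j1 + j2)\<close>-th difference into a \<open>j2\<close>-th difference of a \<open>j1\<close>-th one and
  expanding the inner one by (d); (e) is the identity for \<open>x * f x\<close> with \<open>f x = (x + k) ^ i\<close>.\<close>

definition fwd_diff :: "('a::semiring_1 \<Rightarrow> 'b::ab_group_add) \<Rightarrow> 'a \<Rightarrow> 'b" where
  "fwd_diff f x = f (x + 1) - f x"

lemma alternating_binomial_sum_Suc:
  fixes h :: "nat \<Rightarrow> 'a::comm_ring_1"
  shows "(\<Sum>r\<le>Suc j. of_nat (Suc j choose r) * (-1) ^ (Suc j - r) * h r)
    = (\<Sum>r\<le>j. of_nat (j choose r) * (-1) ^ (j - r) * h (Suc r))
      - (\<Sum>r\<le>j. of_nat (j choose r) * (-1) ^ (j - r) * h r)"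
proof -
  have lower: "(\<Sum>r\<le>Suc j. of_nat (j choose r) * (-1) ^ (Suc j - r) * h r)
      = - (\<Sum>r\<le>j. of_nat (j choose r) * (-1) ^ (j - r) * h r)"
    by (simp add: Suc_diff_le sum_negf binomial_eq_0)
  have upper: "(\<Sum>r\<le>Suc j. of_nat (if r = 0 then 0 else j choose (r - 1)) * (-1) ^ (Suc j - r) * h r)
      = (\<Sum>r\<le>j. of_nat (j choose r) * (-1) ^ (j - r) * h (Suc r))"
    by (subst sum.atMost_Suc_shift) simp
  have "Suc j choose r = (j choose r) + (if r = 0 then 0 else j choose (r - 1))" for r
    by (cases r) simp_all
  then have "(\<Sum>r\<le>Suc j. of_nat (Suc j choose r) * (-1) ^ (Suc j - r) * h r)
      = (\<Sum>r\<le>Suc j. of_nat (j choose r) * (-1) ^ (Suc j - r) * h r)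
      + (\<Sum>r\<le>Suc j. of_nat (if r = 0 then 0 else j choose (r - 1)) * (-1) ^ (Suc j - r) * h r)"
    by (simp only: of_nat_add distrib_right sum.distrib)
  then show ?thesis
    by (simp only: lower upper) simp
qed

lemma funpow_fwd_diff_Suc:
  "(fwd_diff ^^ Suc j) f x = (fwd_diff ^^ j) f (x + 1) - (fwd_diff ^^ j) f x"
  by (simp only: funpow.simps comp_apply) (rule fwd_diff_def)

lemma funpow_fwd_diff_eq_sum:
  "(fwd_diff ^^ j) f x = (\<Sum>r\<le>j. of_nat (j choose r) * (-1) ^ (j - r) * f (x + of_nat r))"
  for f :: "'a::semiring_1 \<Rightarrow> 'b::comm_ring_1"
proof (induction j arbitrary: x)
  case 0
  then show ?case by simp
next
  case (Suc j)
  show ?case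
    by (simp only: funpow_fwd_diff_Suc Suc.IH alternating_binomial_sum_Suc) (simp add: add_ac)
qed

lemma funpow_fwd_diff_shift:
  "(fwd_diff ^^ j) f (x + c) = (fwd_diff ^^ j) (\<lambda>y. f (y + c)) x"
  for f :: "'a::semiring_1 \<Rightarrow> 'b::comm_ring_1"
  by (simp add: funpow_fwd_diff_eq_sum add_ac)

lemma funpow_fwd_diff_sum:
  "(fwd_diff ^^ j) (\<lambda>x. \<Sum>r\<in>A. c r * g r x) y = (\<Sum>r\<in>A. c r * (fwd_diff ^^ j) (g r) y)"
  for g :: "'i \<Rightarrow> 'a::semiring_1 \<Rightarrow> 'b::ring"
proof (induction j arbitrary: y)
  case 0
  then show ?case by simp
next
  case (Suc j)
  then show ?case
    by (simp only: funpow_fwd_diff_Suc) (simp add: sum_subtractf right_diff_distrib)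
qed

lemma funpow_fwd_diff_times_id:
  "(fwd_diff ^^ Suc m) (\<lambda>x. x * f x) 0 = of_nat (Suc m) * (fwd_diff ^^ m) f 1"
  for f :: "'a::comm_ring_1 \<Rightarrow> 'a"
proof -
  have "(fwd_diff ^^ Suc m) (\<lambda>x. x * f x) 0
      = (\<Sum>r\<le>m. of_nat (Suc m choose Suc r) * (-1) ^ (m - r) * (of_nat (Suc r) * f (of_nat (Suc r))))"
    by (simp only: funpow_fwd_diff_eq_sum sum.atMost_Suc_shift) simp
  also have "\<dots> = (\<Sum>r\<le>m. of_nat (Suc m) * (of_nat (m choose r) * (-1) ^ (m - r) * f (of_nat (Suc r))))"
  proof (rule sum.cong)
    fix r
    have "of_nat (Suc m choose Suc r) * (-1) ^ (m - r) * (of_nat (Suc r) * f (of_nat (Suc r)))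
        = (of_nat (Suc m choose Suc r) * of_nat (Suc r)) * ((-1) ^ (m - r) * f (of_nat (Suc r)) :: 'a)"
      by (simp only: mult_ac)
    also have "\<dots> = (of_nat (Suc m) * of_nat (m choose r)) * ((-1) ^ (m - r) * f (of_nat (Suc r)))"
      by (simp only: Suc_times_binomial_eq flip: of_nat_mult)
    finally show "of_nat (Suc m choose Suc r) * (-1) ^ (m - r) * (of_nat (Suc r) * f (of_nat (Suc r)))
        = of_nat (Suc m) * (of_nat (m choose r) * (-1) ^ (m - r) * f (of_nat (Suc r)))"
      by (simp only: mult_ac)
  qed simp
  finally show ?thesis
    by (simp add: funpow_fwd_diff_eq_sum sum_distrib_left add.commute)
qed

lemma sum_binomial_reflect:
  "(\<Sum>r=0..n. of_nat (n choose r) * a ^ (n - r) * g r) = (\<Sum>r=0..n. of_nat (n choose r) * a ^ r * g (n - r))"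
  for a :: "'a::comm_semiring_1"
  by (subst sum.atLeastAtMost_rev) (auto intro: sum.cong simp: binomial_symmetric[symmetric])

lemma b_eq_funpow_fwd_diff: "b i j k = (fwd_diff ^^ j) (\<lambda>x. x ^ i) k"
  by (simp add: b_def funpow_fwd_diff_eq_sum atMost_atLeast0 add.commute)

lemma b_add_eq_sum: "b i j (k1 + k2) = (\<Sum>r=0..i. real (i choose r) * k1 ^ (i - r) * b r j k2)"
proof -
  have "b i j (k1 + k2) = (fwd_diff ^^ j) (\<lambda>x. x ^ i) (k2 + k1)"
    by (simp add: b_eq_funpow_fwd_diff add.commute)
  also have "\<dots> = (fwd_diff ^^ j) (\<lambda>x. (x + k1) ^ i) k2"
    by (rule funpow_fwd_diff_shift)
  also have "\<dots> = (fwd_diff ^^ j) (\<lambda>x. \<Sum>r=0..i. (real (i choose r) * k1 ^ (i - r)) * x ^ r) k2"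
    by (simp add: binomial_ring atMost_atLeast0 mult_ac)
  finally show ?thesis
    by (simp add: funpow_fwd_diff_sum b_eq_funpow_fwd_diff)
qed

lemma b_add_convolution:
  "b i (j1 + j2) (k1 + k2) = (\<Sum>r=0..i. real (i choose r) * b r j1 k1 * b (i - r) j2 k2)"
proof -
  have "b i (j1 + j2) (k1 + k2) = (fwd_diff ^^ j2) (\<lambda>y. b i j1 (y + k1)) k2"
    by (simp add: b_eq_funpow_fwd_diff add.commute[of j1] funpow_add funpow_fwd_diff_shift
        add.commute[of k1])
  also have "\<dots> = (fwd_diff ^^ j2) (\<lambda>y. \<Sum>r=0..i. (real (i choose r) * b r j1 k1) * y ^ (i - r)) k2"
    by (simp add: b_add_eq_sum mult_ac)
  finally show ?thesis
    by (simp add: funpow_fwd_diff_sum b_eq_funpow_fwd_diff)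
qed

lemma of_nat_Suc_mult_b:
  "real (Suc m) * b i m (k + 1) = (\<Sum>r=0..i. real (i choose r) * k ^ (i - r) * b (r + 1) (Suc m) 0)"
proof -
  have "(\<Sum>r=0..i. real (i choose r) * k ^ (i - r) * b (r + 1) (Suc m) 0)
      = (fwd_diff ^^ Suc m) (\<lambda>x. \<Sum>r=0..i. (real (i choose r) * k ^ (i - r)) * x ^ (r + 1)) 0"
    by (simp only: funpow_fwd_diff_sum b_eq_funpow_fwd_diff)
  also have "(\<lambda>x. \<Sum>r=0..i. (real (i choose r) * k ^ (i - r)) * x ^ (r + 1)) = (\<lambda>x. x * (x + k) ^ i)"
    by (simp add: binomial_ring atMost_atLeast0 sum_distrib_left mult_ac)
  also have "(fwd_diff ^^ Suc m) (\<lambda>x. x * (x + k) ^ i) 0 = real (Suc m) * (fwd_diff ^^ m) (\<lambda>x. (x + k) ^ i) 1"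
    by (rule funpow_fwd_diff_times_id)
  finally show ?thesis
    by (simp add: b_eq_funpow_fwd_diff funpow_fwd_diff_shift add.commute)
qed

theorem mainTheorem9:
  fixes i j j1 j2 :: nat and k1 k2 k :: real
  shows "b i (j1 + j2) 0 = (\<Sum>r=0..i. real (i choose r) * b r j1 k * b (i - r) j2 (- k))
    \<and> b i j 0 = (\<Sum>r=0..i. real (i choose r) * k ^ r * b (i - r) j (- k))
    \<and> b i j k = (\<Sum>r=0..i. real (i choose r) * k ^ (i - r) * b r j 0)
    \<and> b i j (k1 + k2) = (\<Sum>r=0..i. real (i choose r) * k1 ^ (i - r) * b r j k2)
    \<and> (j \<ge> 1 \<longrightarrow> real j * b i (j - 1) (k + 1) = (\<Sum>r=0..i. real (i choose r) * k ^ (i - r) * b (r + 1) j 0))"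
proof (intro conjI impI)
  show "b i (j1 + j2) 0 = (\<Sum>r=0..i. real (i choose r) * b r j1 k * b (i - r) j2 (- k))"
    using b_add_convolution[of i j1 j2 k "- k"] by simp
  show "b i j 0 = (\<Sum>r=0..i. real (i choose r) * k ^ r * b (i - r) j (- k))"
    using b_add_eq_sum[of i j k "- k"] by (simp add: sum_binomial_reflect)
  show "b i j k = (\<Sum>r=0..i. real (i choose r) * k ^ (i - r) * b r j 0)"
    using b_add_eq_sum[of i j k 0] by simp
  show "b i j (k1 + k2) = (\<Sum>r=0..i. real (i choose r) * k1 ^ (i - r) * b r j k2)"
    by (rule b_add_eq_sum)
  assume "j \<ge> 1"
  then obtain m where "j = Suc m"
    using not0_implies_Suc by fastforce
  then show "real j * b i (j - 1) (k + 1) = (\<Sum>r=0..i. real (i choose r) * k ^ (i - r) * b (r + 1) j 0)"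
    using of_nat_Suc_mult_b by simp
qed

end
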